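(* Assume only that each finest set $I_{j_1,\dots,j_M}$ contains at least one observed index (the set $I_{\bm y_t}$ below), together with the uniformity conditions $J_m=J$, $r'_{j_1,\dots,j_m}=r'_m$. Let $B$ be an $n\times N'$ matrix with the MRA-lp block sparsity pattern, let $D$ be an $n\times n$ diagonal matrix with nonnegative diagonal entries and $D_{ii}=0$ for $i\notin I_{\bm y_t}$, let $\Lambda_{D}=\mathbf I_{N'}+B^\top DB$, let $L_D$ be its lower triangular Cholesky factor, and let $B_D=B(L_D^{-1})^\top$. Then: (a) for $p\ge q$, the $(M+1-p,M+1-q)$th block of $\Lambda_D$ (blocks induced by the column blocks $B^M,\dots,B^0$ of $B$) has size $J^pr'_p\times J^qr'_q$ and is block diagonal with $J^q$ diagonal blocks of size $J^{p-q}r'_p\times r'_q$, entries outside them being zero; (b) with $G=(V,E)$ the undirected graph on $v_1,\dots,v_{N'}$ whose adjacency matrix has 1 at every off-diagonal position inside one of the blocks described in (a) (and symmetric counterpart) and 0 elsewhere, if $1\le j<i\le N'$ and $(v_i,v_j)\notin E$ then $L_D[i,j]=L_D^{-1}[i,j]=0$; (c) $B_D$ has zero entries at every position outside the diagonal blocks $B_{j_1,\dots,j_m}$ ($m=0,\dots,M$) of the MRA-lp pattern; (d) the number of nonzero entries in each column of $L_D$ and of $L_D^{-1}$ is $\mathcal O(N)$, $N=\sum_{m=0}^M r'_m$.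
   Context: Grid indices $I_0=\{1,\dots,n\}$; $M\ge 0$, $J\ge 2$; multi-indices $(j_1,\dots,j_m)$, $1\le j_i\le J$ (empty multi-index $0$ for $m=0$); nested index sets $I_{j_1,\dots,j_m}$ with $I_0$ at $m=0$ and $I_{j_1,\dots,j_m}$ the disjoint union of $I_{j_1,\dots,j_m,j_{m+1}}$, $j_{m+1}=1,\dots,J$; indices ordered so that lexicographically larger finest multi-indices $(j_1,\dots,j_M)$ have all their indices larger. Integers $r'_m\ge 1$; $N'=\sum_{m=0}^M J^m r'_m$. MRA-lp block sparsity pattern: $B=(B^M\;\cdots\;B^0)$, where $B^m$ is an $n$-row block diagonal matrix whose diagonal blocks $B_{j_1,\dots,j_m}$, of size $|I_{j_1,\dots,j_m}|\times r'_m$, occupy rows $I_{j_1,\dots,j_m}$, in lexicographic order of $(j_1,\dots,j_m)$, all other entries being zero (the MRA-lp output of a symmetric positive definite matrix has this form). $I_{\bm y_t}\subseteq I_0$ is the set of grid indices at which observations are available at time $t$. In the paper's non-Gaussian filter, $D$ is the diagonal matrix of negative second derivatives $-\frac{d^2}{dx_{ti}^2}\log g_{ti}(y_{ti}\mid x_{ti})$ at observed indices (assumed nonnegative), zero elsewhere. *)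

theory Defs
  imports Complex_Main
begin

text \<open>Conventions (0-based indices throughout).
  Grid indices are 0,...,n-1.  A multi-index (j_1,...,j_m) with 1 <= j_i <= J is encoded by its
  lexicographic rank  sum_i (j_i - 1) J^(m-i)  in {0..<J^m}.  The finest set of a grid index i
  is given by  cell i < J^M  (its finest multi-index, encoded); the ancestor of a finest cell c at
  level m is  c div J^(M-m).  Hence  I_{(j_1..j_m)} = {i < n. cell i div J^(M-m) = rank(j_1..j_m)}.
  Matrices are functions nat => nat => real, restricted to the stated dimensions.\<close>

text \<open>Nested partition: cell indices are monotone in the grid index (lexicographically larger
  finest multi-indices have larger grid indices), every finest cell contains an observed index.\<close>
definition mra_partition :: "nat \<Rightarrow> nat \<Rightarrow> nat \<Rightarrow> (nat \<Rightarrow> nat) \<Rightarrow> nat set \<Rightarrow> bool" where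
  "mra_partition n M J cell obs \<longleftrightarrow>
     obs \<subseteq> {..<n} \<and>
     (\<forall>i<n. cell i < J ^ M) \<and>
     (\<forall>i i'. i \<le> i' \<longrightarrow> i' < n \<longrightarrow> cell i \<le> cell i') \<and>
     (\<forall>c < J ^ M. \<exists>i\<in>obs. cell i = c)"

definition Nprime :: "nat \<Rightarrow> nat \<Rightarrow> (nat \<Rightarrow> nat) \<Rightarrow> nat" where
  "Nprime M J r = (\<Sum>m\<le>M. J ^ m * r m)"

text \<open>Columns are ordered B^M, B^{M-1}, ..., B^0; the columns of B^m start at col_start m.\<close>
definition col_start :: "nat \<Rightarrow> nat \<Rightarrow> (nat \<Rightarrow> nat) \<Rightarrow> nat \<Rightarrow> nat" where
  "col_start M J r m = (\<Sum>m'\<in>{m<..M}. J ^ m' * r m')"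

definition col_level :: "nat \<Rightarrow> nat \<Rightarrow> (nat \<Rightarrow> nat) \<Rightarrow> nat \<Rightarrow> nat" where
  "col_level M J r k = (THE m. m \<le> M \<and> col_start M J r m \<le> k \<and> k < col_start M J r m + J ^ m * r m)"

text \<open>Encoded multi-index (j_1..j_m) of the diagonal block B_{j_1..j_m} containing column k
  (within B^m the blocks come in lexicographic order, each with r'_m columns).\<close>
definition col_block :: "nat \<Rightarrow> nat \<Rightarrow> (nat \<Rightarrow> nat) \<Rightarrow> nat \<Rightarrow> nat" where
  "col_block M J r k = (k - col_start M J r (col_level M J r k)) div r (col_level M J r k)"

definition mra_lp_pattern :: "nat \<Rightarrow> nat \<Rightarrow> nat \<Rightarrow> (nat \<Rightarrow> nat) \<Rightarrow> (nat \<Rightarrow> nat)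
    \<Rightarrow> (nat \<Rightarrow> nat \<Rightarrow> real) \<Rightarrow> bool" where
  "mra_lp_pattern n M J r cell B \<longleftrightarrow>
     (\<forall>i<n. \<forall>k<Nprime M J r.
        cell i div J ^ (M - col_level M J r k) \<noteq> col_block M J r k \<longrightarrow> B i k = 0)"

text \<open>Positions (k,l) lying inside one of the diagonal blocks of part (a) (or the symmetric
  counterpart): with p = level k >= q = level l, block of k's ancestor at level q equals block of l.\<close>
definition in_block_pattern :: "nat \<Rightarrow> nat \<Rightarrow> (nat \<Rightarrow> nat) \<Rightarrow> nat \<Rightarrow> nat \<Rightarrow> bool" where
  "in_block_pattern M J r k l \<longleftrightarrow>
     (let p = col_level M J r k; q = col_level M J r l in
      if q \<le> p then col_block M J r k div J ^ (p - q) = col_block M J r l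
      else col_block M J r l div J ^ (q - p) = col_block M J r k)"

definition mra_adj :: "nat \<Rightarrow> nat \<Rightarrow> (nat \<Rightarrow> nat) \<Rightarrow> nat \<Rightarrow> nat \<Rightarrow> bool" where
  "mra_adj M J r k l \<longleftrightarrow> k \<noteq> l \<and> in_block_pattern M J r k l"

definition Lambda_D :: "nat \<Rightarrow> (nat \<Rightarrow> nat \<Rightarrow> real) \<Rightarrow> (nat \<Rightarrow> real) \<Rightarrow> nat \<Rightarrow> nat \<Rightarrow> real" where
  "Lambda_D n B d k l = (if k = l then 1 else 0) + (\<Sum>i<n. B i k * d i * B i l)"

definition cholesky_factor :: "nat \<Rightarrow> (nat \<Rightarrow> nat \<Rightarrow> real) \<Rightarrow> (nat \<Rightarrow> nat \<Rightarrow> real) \<Rightarrow> bool" where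
  "cholesky_factor N A L \<longleftrightarrow>
     (\<forall>k<N. \<forall>l<N. k < l \<longrightarrow> L k l = 0) \<and>
     (\<forall>k<N. L k k > 0) \<and>
     (\<forall>k<N. \<forall>l<N. (\<Sum>s<N. L k s * L l s) = A k l)"

definition is_inverse :: "nat \<Rightarrow> (nat \<Rightarrow> nat \<Rightarrow> real) \<Rightarrow> (nat \<Rightarrow> nat \<Rightarrow> real) \<Rightarrow> bool" where
  "is_inverse N L Linv \<longleftrightarrow>
     (\<forall>k<N. \<forall>l<N. (\<Sum>s<N. L k s * Linv s l) = (if k = l then 1 else 0)) \<and>
     (\<forall>k<N. \<forall>l<N. (\<Sum>s<N. Linv k s * L s l) = (if k = l then 1 else 0))"

definition B_D :: "nat \<Rightarrow> (nat \<Rightarrow> nat \<Rightarrow> real) \<Rightarrow> (nat \<Rightarrow> nat \<Rightarrow> real) \<Rightarrow> nat \<Rightarrow> nat \<Rightarrow> real" where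
  "B_D N B Linv i k = (\<Sum>l<N. B i l * Linv k l)"

end

theory Submission
  imports Defs
begin

text \<open>Two columns of \<open>B\<close> share a grid index only if the multi-index of one diagonal
  block is a prefix of the other's, so \<open>\<Lambda>\<^sub>D\<close> is supported on pairs of nested blocks.
  The columns are ordered from the finest level to the coarsest, and the blocks containing
  a given block form a chain; hence Cholesky elimination produces no fill-in, \<open>L\<^sub>D\<close> has the
  support of \<open>\<Lambda>\<^sub>D\<close>, and since nestedness is transitive so does \<open>L\<^sub>D\<^sup>-\<^sup>1\<close>. Consequently column
  \<open>k\<close> of \<open>B\<^sub>D = B L\<^sub>D\<^sup>-\<^sup>T\<close> combines only columns of \<open>B\<close> whose blocks lie inside the block of
  column \<open>k\<close>, which keeps the MRA-lp pattern, and a column of \<open>L\<^sub>D\<close> or \<open>L\<^sub>D\<^sup>-\<^sup>1\<close> can only be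
  nonzero at the \<open>r'\<^sub>m\<close> columns of the unique enclosing block at each level \<open>m\<close>.\<close>

section \<open>Cholesky factors without fill-in\<close>

lemma cholesky_factor_support:
  fixes R :: "nat \<Rightarrow> nat \<Rightarrow> bool"
  assumes chol: "cholesky_factor N A L"
    and refl: "\<And>i. R i i"
    and A_zero: "\<And>i j. j < i \<Longrightarrow> i < N \<Longrightarrow> \<not> R j i \<Longrightarrow> A i j = 0"
    and chain: "\<And>s j i. s < j \<Longrightarrow> j < i \<Longrightarrow> i < N \<Longrightarrow> R s j \<Longrightarrow> R s i \<Longrightarrow> R j i"
    and "i < N" "j < N" "L i j \<noteq> 0"
  shows "j \<le> i \<and> R j i"
  using assms(5-7)
proof (induction j arbitrary: i rule: less_induct)
  case (less j)
  have upper: "L k l = 0" if "k < l" "l < N" for k l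
    using chol that unfolding cholesky_factor_def by auto
  have diag: "L j j \<noteq> 0"
    using chol \<open>j < N\<close> unfolding cholesky_factor_def by (metis less_irrefl)
  consider "i < j" | "i = j" | "j < i" by linarith
  then show ?case
  proof cases
    case 1
    then show ?thesis using upper less.prems by blast
  next
    case 2
    then show ?thesis using refl by simp
  next
    case 3
    show ?thesis
    proof (rule ccontr)
      assume "\<not> (j \<le> i \<and> R j i)"
      with 3 have not_R: "\<not> R j i" by simp
      have other_terms: "L i s * L j s = 0" if "s < N" "s \<noteq> j" for s
      proof (rule ccontr)
        assume "L i s * L j s \<noteq> 0"
        then have "L i s \<noteq> 0" "L j s \<noteq> 0" by auto
        then have "s < j" using upper[of j s] that less.prems by fastforce
        then have "R s j" "R s i"
          using less.IH \<open>L i s \<noteq> 0\<close> \<open>L j s \<noteq> 0\<close> that less.prems by auto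
        then show False using chain \<open>s < j\<close> 3 less.prems not_R by blast
      qed
      have "L i j * L j j = (\<Sum>s<N. L i s * L j s)"
        by (subst sum.mono_neutral_right[of _ "{j}"]) (use other_terms less.prems in auto)
      also have "\<dots> = A i j"
        using chol less.prems unfolding cholesky_factor_def by blast
      also have "\<dots> = 0" using A_zero 3 less.prems not_R by blast
      finally show False using diag \<open>L i j \<noteq> 0\<close> by simp
    qed
  qed
qed

lemma lower_triangular_inverse_support:
  fixes R :: "nat \<Rightarrow> nat \<Rightarrow> bool" and L Linv :: "nat \<Rightarrow> nat \<Rightarrow> 'a :: ring_1_no_zero_divisors"
  assumes L_support: "\<And>k s. k < N \<Longrightarrow> s < N \<Longrightarrow> L k s \<noteq> 0 \<Longrightarrow> s \<le> k \<and> R s k"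
    and diag: "\<And>k. k < N \<Longrightarrow> L k k \<noteq> 0"
    and right_inverse: "\<And>k l. k < N \<Longrightarrow> l < N \<Longrightarrow>
      (\<Sum>s<N. L k s * Linv s l) = (if k = l then 1 else 0)"
    and refl: "\<And>i. R i i"
    and trans: "\<And>a b c. R a b \<Longrightarrow> R b c \<Longrightarrow> R a c"
    and "k < N" "l < N" "Linv k l \<noteq> 0"
  shows "l \<le> k \<and> R l k"
  using assms(6-8)
proof (induction k rule: less_induct)
  case (less k)
  show ?case
  proof (rule ccontr)
    assume not_below: "\<not> (l \<le> k \<and> R l k)"
    have other_terms: "L k s * Linv s l = 0" if "s < N" "s \<noteq> k" for s
    proof (rule ccontr)
      assume "L k s * Linv s l \<noteq> 0"
      then have "L k s \<noteq> 0" "Linv s l \<noteq> 0" by auto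
      then have "s < k" "R s k" using L_support that less.prems by fastforce+
      then have "l \<le> s" "R l s" using less.IH \<open>Linv s l \<noteq> 0\<close> less.prems by auto
      then show False using not_below \<open>s < k\<close> \<open>R s k\<close> trans by fastforce
    qed
    have "L k k * Linv k l = (\<Sum>s<N. L k s * Linv s l)"
      by (subst sum.mono_neutral_right[of _ "{k}"]) (use other_terms less.prems in auto)
    also have "\<dots> = 0" using right_inverse less.prems not_below refl by auto
    finally show False using diag \<open>Linv k l \<noteq> 0\<close> less.prems by simp
  qed
qed

section \<open>Column layout of the MRA-lp pattern\<close>

lemma div_power_diff:
  fixes c J :: nat
  assumes "q \<le> p" "p \<le> M"
  shows "c div J ^ (M - p) div J ^ (p - q) = c div J ^ (M - q)"
proof -
  have "M - q = (M - p) + (p - q)" using assms by simp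
  then show ?thesis by (simp add: div_mult2_eq power_add)
qed

lemma div_eq_iff_bounds:
  fixes x R t :: nat
  assumes "0 < R"
  shows "x div R = t \<longleftrightarrow> t * R \<le> x \<and> x < t * R + R"
proof -
  have "x div R * R \<le> x" "x < x div R * R + R"
    using div_mult_mod_eq[of x R] mod_less_divisor[OF assms, of x] by linarith+
  then show ?thesis by (auto intro: div_nat_eqI simp: mult.commute)
qed

lemma col_start_add_le:
  assumes "m < m'" "m' \<le> M"
  shows "col_start M J r m' + J ^ m' * r m' \<le> col_start M J r m"
proof -
  have "col_start M J r m' + J ^ m' * r m' = (\<Sum>x\<in>{m'..M}. J ^ x * r x)"
    using assms by (simp add: col_start_def sum.atLeast_Suc_atMost atLeastSucAtMost_greaterThanAtMost)
  also have "\<dots> \<le> (\<Sum>x\<in>{m<..M}. J ^ x * r x)"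
    using assms by (intro sum_mono2) auto
  finally show ?thesis by (simp add: col_start_def)
qed

lemma col_start_add_le_Nprime:
  assumes "m \<le> M"
  shows "col_start M J r m + J ^ m * r m \<le> Nprime M J r"
proof -
  have "col_start M J r m + J ^ m * r m = (\<Sum>x\<in>{m..M}. J ^ x * r x)"
    using assms by (simp add: col_start_def sum.atLeast_Suc_atMost atLeastSucAtMost_greaterThanAtMost)
  also have "\<dots> \<le> (\<Sum>x\<le>M. J ^ x * r x)"
    by (intro sum_mono2) auto
  finally show ?thesis by (simp add: Nprime_def)
qed

lemma col_level_eqI:
  assumes "m \<le> M" "col_start M J r m \<le> k" "k < col_start M J r m + J ^ m * r m"
  shows "col_level M J r k = m"
  unfolding col_level_def
proof (rule the_equality)
  fix m' assume m': "m' \<le> M \<and> col_start M J r m' \<le> k \<and> k < col_start M J r m' + J ^ m' * r m'"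
  show "m' = m"
  proof (rule ccontr)
    assume "m' \<noteq> m"
    then consider "m' < m" | "m < m'" by linarith
    then show False
      by cases (use col_start_add_le[of m' m M J r] col_start_add_le[of m m' M J r] assms m' in linarith)+
  qed
qed (use assms in simp)

lemma col_level_bounds:
  assumes "k < Nprime M J r"
  shows "col_level M J r k \<le> M \<and> col_start M J r (col_level M J r k) \<le> k \<and>
    k < col_start M J r (col_level M J r k) + J ^ col_level M J r k * r (col_level M J r k)"
proof -
  define m where "m = (LEAST m. col_start M J r m \<le> k)"
  have start_M: "col_start M J r M \<le> k" by (simp add: col_start_def)
  have "col_start M J r m \<le> k" "m \<le> M"
    unfolding m_def by (rule LeastI[of _ M], rule start_M) (rule Least_le, rule start_M)
  moreover have "k < col_start M J r m + J ^ m * r m"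
  proof (cases m)
    case 0
    have "col_start M J r 0 + r 0 = Nprime M J r"
      by (simp add: col_start_def Nprime_def atMost_atLeast0 sum.atLeast_Suc_atMost
          atLeastSucAtMost_greaterThanAtMost)
    then show ?thesis using 0 assms by simp
  next
    case (Suc m')
    have "\<not> col_start M J r m' \<le> k"
      using not_less_Least[of m' "\<lambda>m. col_start M J r m \<le> k"] Suc unfolding m_def by simp
    moreover have "{m'<..M} = insert m {m<..M}" using Suc \<open>m \<le> M\<close> by auto
    ultimately show ?thesis by (simp add: col_start_def)
  qed
  ultimately show ?thesis using col_level_eqI by metis
qed

lemma col_level_eq_iff:
  assumes "p \<le> M"
  shows "k < Nprime M J r \<and> col_level M J r k = p \<longleftrightarrow>
    col_start M J r p \<le> k \<and> k < col_start M J r p + J ^ p * r p"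
proof
  assume "k < Nprime M J r \<and> col_level M J r k = p"
  then show "col_start M J r p \<le> k \<and> k < col_start M J r p + J ^ p * r p"
    using col_level_bounds[of k M J r] by auto
next
  assume "col_start M J r p \<le> k \<and> k < col_start M J r p + J ^ p * r p"
  then show "k < Nprime M J r \<and> col_level M J r k = p"
    using col_level_eqI[OF assms] col_start_add_le_Nprime[OF assms, of J r] by auto
qed

lemma col_level_antimono:
  assumes "k \<le> k'" "k' < Nprime M J r"
  shows "col_level M J r k' \<le> col_level M J r k"
proof (rule ccontr)
  assume "\<not> col_level M J r k' \<le> col_level M J r k"
  then show False
    using assms col_level_bounds[of k M J r] col_level_bounds[of k' M J r]
      col_start_add_le[of "col_level M J r k" "col_level M J r k'" M J r]
    by linarith
qed

lemma col_block_less: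
  assumes "k < Nprime M J r"
  shows "col_block M J r k < J ^ col_level M J r k"
  unfolding col_block_def
  by (rule less_mult_imp_div_less) (use col_level_bounds[OF assms] in linarith)

lemma col_block_div_set:
  assumes J: "0 < J" and r_pos: "0 < r p" and "q \<le> p" "p \<le> M" "t < J ^ q"
  defines "R \<equiv> J ^ (p - q) * r p"
  defines "a \<equiv> col_start M J r p + t * R"
  shows "{k. k < Nprime M J r \<and> col_level M J r k = p \<and> col_block M J r k div J ^ (p - q) = t} =
    {a ..< a + R}"
proof (intro set_eqI iffI)
  have R_pos: "0 < R" using J r_pos by (simp add: R_def)
  have "t * R + R = (t + 1) * J ^ (p - q) * r p" by (simp add: R_def algebra_simps)
  also have "\<dots> \<le> J ^ q * J ^ (p - q) * r p" using assms(5) by (intro mult_right_mono) auto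
  also have "\<dots> = J ^ p * r p" using assms(3) by (simp add: power_add[symmetric])
  finally have in_level: "t * R + R \<le> J ^ p * r p" .
  have block_div: "col_block M J r k div J ^ (p - q) = (k - col_start M J r p) div R"
    if "col_level M J r k = p" for k
    using that by (simp add: R_def col_block_def div_mult2_eq mult.commute)
  fix k
  show "k \<in> {a ..< a + R}"
    if "k \<in> {k. k < Nprime M J r \<and> col_level M J r k = p \<and> col_block M J r k div J ^ (p - q) = t}"
  proof -
    have "col_start M J r p \<le> k"
      using that col_level_eq_iff[OF assms(4), of k J r] by simp
    moreover have "(k - col_start M J r p) div R = t"
      using that block_div by auto
    then have "t * R \<le> k - col_start M J r p \<and> k - col_start M J r p < t * R + R"
      using div_eq_iff_bounds[OF R_pos, of "k - col_start M J r p" t] by simp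
    ultimately show ?thesis by (auto simp: a_def)
  qed
  show "k \<in> {k. k < Nprime M J r \<and> col_level M J r k = p \<and> col_block M J r k div J ^ (p - q) = t}"
    if "k \<in> {a ..< a + R}"
  proof -
    have bounds: "t * R \<le> k - col_start M J r p \<and> k - col_start M J r p < t * R + R"
      using that by (auto simp: a_def)
    have "col_start M J r p \<le> k \<and> k < col_start M J r p + J ^ p * r p"
      using that in_level by (simp add: a_def)
    then have "k < Nprime M J r" "col_level M J r k = p"
      using col_level_eq_iff[OF assms(4), of k J r] by simp_all
    moreover have "(k - col_start M J r p) div R = t"
      using bounds div_eq_iff_bounds[OF R_pos, of "k - col_start M J r p" t] by simp
    ultimately show ?thesis using block_div by simp
  qed
qed

lemma card_col_level:
  assumes "p \<le> M"
  shows "card {k. k < Nprime M J r \<and> col_level M J r k = p} = J ^ p * r p"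
proof -
  have "{k. k < Nprime M J r \<and> col_level M J r k = p} =
      {col_start M J r p ..< col_start M J r p + J ^ p * r p}"
    by (auto simp: col_level_eq_iff[OF assms])
  then show ?thesis by simp
qed

lemma card_col_block_div:
  assumes "0 < J" "0 < r p" "q \<le> p" "p \<le> M" "t < J ^ q"
  shows "card {k. k < Nprime M J r \<and> col_level M J r k = p \<and> col_block M J r k div J ^ (p - q) = t} =
    J ^ (p - q) * r p"
  by (simp add: col_block_div_set[where J = J and r = r and p = p and q = q and M = M, OF assms])

lemma card_col_block:
  assumes "0 < J" "0 < r q" "q \<le> M" "t < J ^ q"
  shows "card {l. l < Nprime M J r \<and> col_level M J r l = q \<and> col_block M J r l = t} = r q"
  using card_col_block_div[where J = J and r = r and p = q and q = q and M = M] assms by simp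

section \<open>Nested diagonal blocks\<close>

text \<open>\<open>col_nested M J r l k\<close>: the multi-index of the diagonal block of column \<open>k\<close> is a
  prefix of that of column \<open>l\<close>, i.e. \<open>I\<close> of the block of \<open>l\<close> is contained in \<open>I\<close> of the
  block of \<open>k\<close>.\<close>
definition col_nested :: "nat \<Rightarrow> nat \<Rightarrow> (nat \<Rightarrow> nat) \<Rightarrow> nat \<Rightarrow> nat \<Rightarrow> bool" where
  "col_nested M J r l k \<longleftrightarrow> col_level M J r k \<le> col_level M J r l \<and>
     col_block M J r l div J ^ (col_level M J r l - col_level M J r k) = col_block M J r k"

abbreviation cell_in_col :: "nat \<Rightarrow> nat \<Rightarrow> (nat \<Rightarrow> nat) \<Rightarrow> nat \<Rightarrow> nat \<Rightarrow> bool" where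
  "cell_in_col M J r c k \<equiv> c div J ^ (M - col_level M J r k) = col_block M J r k"

lemma col_nested_refl: "col_nested M J r k k"
  by (simp add: col_nested_def)

lemma col_nested_trans:
  assumes ab: "col_nested M J r a b" and bc: "col_nested M J r b c"
  shows "col_nested M J r a c"
proof -
  have "col_level M J r c \<le> col_level M J r b" "col_level M J r b \<le> col_level M J r a"
    using ab bc by (simp_all add: col_nested_def)
  with div_power_diff[OF this, of "col_block M J r a" J] show ?thesis
    using ab bc by (simp add: col_nested_def)
qed

lemma col_nested_chain:
  assumes si: "col_nested M J r s i" and sj: "col_nested M J r s j"
    and "col_level M J r i \<le> col_level M J r j"
  shows "col_nested M J r j i"
proof -
  have "col_level M J r j \<le> col_level M J r s" using sj by (simp add: col_nested_def)
  with div_power_diff[OF assms(3) this, of "col_block M J r s" J] show ?thesis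
    using assms by (simp add: col_nested_def)
qed

lemma in_block_pattern_iff:
  "in_block_pattern M J r k l \<longleftrightarrow> col_nested M J r k l \<or> col_nested M J r l k"
  by (auto simp: in_block_pattern_def col_nested_def Let_def)

lemma col_nested_if_later:
  assumes "col_nested M J r k l" "l \<le> k" "k < Nprime M J r"
  shows "col_nested M J r l k"
  using assms col_level_antimono[of l k M J r] by (auto simp: col_nested_def)

lemma cell_in_col_nested:
  assumes "col_nested M J r l k" "l < Nprime M J r" "cell_in_col M J r c l"
  shows "cell_in_col M J r c k"
  using assms col_level_bounds[of l M J r]
    div_power_diff[of "col_level M J r k" "col_level M J r l" M c J]
  by (auto simp: col_nested_def)

lemma col_nested_if_common_cell:
  assumes "k < Nprime M J r" "l < Nprime M J r" "cell_in_col M J r c k" "cell_in_col M J r c l"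
  shows "col_nested M J r k l \<or> col_nested M J r l k"
  using assms col_level_bounds[of k M J r] col_level_bounds[of l M J r]
    div_power_diff[of "col_level M J r k" "col_level M J r l" M c J]
    div_power_diff[of "col_level M J r l" "col_level M J r k" M c J]
  by (cases "col_level M J r l \<le> col_level M J r k") (auto simp: col_nested_def)

lemma card_col_nested_le:
  assumes J: "0 < J" and r_pos: "\<And>m. m \<le> M \<Longrightarrow> 0 < r m" and j: "j < Nprime M J r"
  shows "card {i. i < Nprime M J r \<and> col_nested M J r j i} \<le> (\<Sum>m\<le>M. r m)"
proof -
  let ?lj = "col_level M J r j" and ?bj = "col_block M J r j"
  define S where "S m = {l. l < Nprime M J r \<and> col_level M J r l = m \<and>
      col_block M J r l = ?bj div J ^ (?lj - m)}" for m
  have "{i. i < Nprime M J r \<and> col_nested M J r j i} \<subseteq> (\<Union>m\<le>M. S m)"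
    using col_level_bounds[of _ M J r] by (auto simp: S_def col_nested_def)
  then have "card {i. i < Nprime M J r \<and> col_nested M J r j i} \<le> card (\<Union>m\<le>M. S m)"
    by (intro card_mono) (auto simp: S_def)
  also have "\<dots> \<le> (\<Sum>m\<le>M. card (S m))"
    by (rule card_UN_le) simp
  also have "\<dots> \<le> (\<Sum>m\<le>M. r m)"
  proof (rule sum_mono)
    fix m assume m: "m \<in> {..M}"
    have "?bj div J ^ (?lj - m) < J ^ m"
    proof (cases "m \<le> ?lj")
      case True
      have "?bj < J ^ m * J ^ (?lj - m)"
        using col_block_less[OF j] True by (simp add: power_add[symmetric])
      then show ?thesis by (rule less_mult_imp_div_less)
    next
      case False
      have "?bj < J ^ ?lj" using col_block_less[OF j] .
      also have "\<dots> \<le> J ^ m" using False J by (intro power_increasing) auto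
      finally show ?thesis using False by simp
    qed
    then show "card (S m) \<le> r m"
      unfolding S_def using card_col_block[where J = J and r = r and q = m and M = M] J r_pos m
      by simp
  qed
  finally show ?thesis .
qed

section \<open>Sparsity of \<open>\<Lambda>\<^sub>D\<close> and of its Cholesky factor\<close>

lemma Lambda_D_eq_0_if_not_nested:
  assumes pat: "mra_lp_pattern n M J r cell B"
    and "k < Nprime M J r" "l < Nprime M J r"
    and "\<not> col_nested M J r k l" "\<not> col_nested M J r l k"
  shows "Lambda_D n B d k l = 0"
proof -
  have "(\<Sum>i<n. B i k * d i * B i l) = 0"
  proof (rule sum.neutral, rule ballI, rule ccontr)
    fix i assume "i \<in> {..<n}"
    assume "B i k * d i * B i l \<noteq> 0"
    then have "cell_in_col M J r (cell i) k" "cell_in_col M J r (cell i) l"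
      using pat \<open>i \<in> {..<n}\<close> assms(2,3) unfolding mra_lp_pattern_def by auto
    then show False using col_nested_if_common_cell assms(2-5) by blast
  qed
  moreover have "k \<noteq> l" using assms(4) col_nested_refl by metis
  ultimately show ?thesis by (simp add: Lambda_D_def)
qed

lemma Lambda_D_eq_0_off_blocks:
  assumes pat: "mra_lp_pattern n M J r cell B"
    and "k < Nprime M J r" "l < Nprime M J r" "col_level M J r l \<le> col_level M J r k"
    and "col_block M J r k div J ^ (col_level M J r k - col_level M J r l) \<noteq> col_block M J r l"
  shows "Lambda_D n B d k l = 0"
proof (rule Lambda_D_eq_0_if_not_nested[OF pat assms(2,3)])
  show "\<not> col_nested M J r k l" using assms(5) by (simp add: col_nested_def)
  show "\<not> col_nested M J r l k"
  proof
    assume "col_nested M J r l k"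
    then have "col_level M J r k = col_level M J r l" "col_block M J r l = col_block M J r k"
      using assms(4) by (auto simp: col_nested_def)
    then show False using assms(5) by simp
  qed
qed

lemma mra_cholesky_support:
  assumes pat: "mra_lp_pattern n M J r cell B"
    and chol: "cholesky_factor (Nprime M J r) (Lambda_D n B d) L"
    and "i < Nprime M J r" "j < Nprime M J r" "L i j \<noteq> 0"
  shows "j \<le> i \<and> col_nested M J r j i"
proof (rule cholesky_factor_support[OF chol col_nested_refl _ _ assms(3-5)])
  fix i j assume "j < i" "i < Nprime M J r" "\<not> col_nested M J r j i"
  moreover from this have "\<not> col_nested M J r i j"
    using col_nested_if_later[of M J r i j] by auto
  ultimately show "Lambda_D n B d i j = 0"
    using Lambda_D_eq_0_if_not_nested[OF pat, of i j] by simp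
next
  fix s j i assume "s < j" "j < i" "i < Nprime M J r"
    "col_nested M J r s j" "col_nested M J r s i"
  then show "col_nested M J r j i"
    using col_nested_chain[of M J r s i j] col_level_antimono[of j i M J r] by simp
qed

lemma mra_cholesky_inverse_support:
  assumes pat: "mra_lp_pattern n M J r cell B"
    and chol: "cholesky_factor (Nprime M J r) (Lambda_D n B d) L"
    and inv: "is_inverse (Nprime M J r) L Linv"
    and "k < Nprime M J r" "l < Nprime M J r" "Linv k l \<noteq> 0"
  shows "l \<le> k \<and> col_nested M J r l k"
proof -
  have L_support: "\<And>k s. k < Nprime M J r \<Longrightarrow> s < Nprime M J r \<Longrightarrow> L k s \<noteq> 0 \<Longrightarrow>
      s \<le> k \<and> col_nested M J r s k"
    using mra_cholesky_support[OF pat chol] by blast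
  have diag: "\<And>k. k < Nprime M J r \<Longrightarrow> L k k \<noteq> 0"
    using chol unfolding cholesky_factor_def by (metis less_irrefl)
  have right_inverse: "\<And>k l. k < Nprime M J r \<Longrightarrow> l < Nprime M J r \<Longrightarrow>
      (\<Sum>s<Nprime M J r. L k s * Linv s l) = (if k = l then 1 else 0)"
    using inv unfolding is_inverse_def by blast
  show ?thesis
    by (rule lower_triangular_inverse_support[where R = "col_nested M J r",
          OF L_support diag right_inverse col_nested_refl col_nested_trans assms(4-6)])
qed

lemma mra_cholesky_eq_0_if_not_adj:
  assumes pat: "mra_lp_pattern n M J r cell B"
    and chol: "cholesky_factor (Nprime M J r) (Lambda_D n B d) L"
    and "j < i" "i < Nprime M J r" "\<not> mra_adj M J r i j"
  shows "L i j = 0"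
  using mra_cholesky_support[OF pat chol, of i j] assms(3-5)
  by (auto simp: mra_adj_def in_block_pattern_iff)

lemma mra_cholesky_inverse_eq_0_if_not_adj:
  assumes pat: "mra_lp_pattern n M J r cell B"
    and chol: "cholesky_factor (Nprime M J r) (Lambda_D n B d) L"
    and inv: "is_inverse (Nprime M J r) L Linv"
    and "j < i" "i < Nprime M J r" "\<not> mra_adj M J r i j"
  shows "Linv i j = 0"
  using mra_cholesky_inverse_support[OF pat chol inv, of i j] assms(4-6)
  by (auto simp: mra_adj_def in_block_pattern_iff)

lemma B_D_eq_0_outside_pattern:
  assumes pat: "mra_lp_pattern n M J r cell B"
    and chol: "cholesky_factor (Nprime M J r) (Lambda_D n B d) L"
    and inv: "is_inverse (Nprime M J r) L Linv"
    and "i < n" "k < Nprime M J r" "\<not> cell_in_col M J r (cell i) k"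
  shows "B_D (Nprime M J r) B Linv i k = 0"
proof -
  have "(\<Sum>l<Nprime M J r. B i l * Linv k l) = 0"
  proof (rule sum.neutral, rule ballI, rule ccontr)
    fix l assume "l \<in> {..<Nprime M J r}" "B i l * Linv k l \<noteq> 0"
    then have "cell_in_col M J r (cell i) l" "col_nested M J r l k"
      using pat mra_cholesky_inverse_support[OF pat chol inv] assms(4,5)
      unfolding mra_lp_pattern_def by auto
    then show False using cell_in_col_nested \<open>l \<in> {..<Nprime M J r}\<close> assms(6) by blast
  qed
  then show ?thesis by (simp add: B_D_def)
qed

lemma card_cholesky_column_le:
  assumes "0 < J" "\<And>m. m \<le> M \<Longrightarrow> 0 < r m"
    and pat: "mra_lp_pattern n M J r cell B"
    and chol: "cholesky_factor (Nprime M J r) (Lambda_D n B d) L"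
    and j: "j < Nprime M J r"
  shows "card {i. i < Nprime M J r \<and> L i j \<noteq> 0} \<le> (\<Sum>m\<le>M. r m)"
proof -
  have "card {i. i < Nprime M J r \<and> L i j \<noteq> 0} \<le> card {i. i < Nprime M J r \<and> col_nested M J r j i}"
    using mra_cholesky_support[OF pat chol _ j] by (intro card_mono) auto
  also have "\<dots> \<le> (\<Sum>m\<le>M. r m)" using card_col_nested_le[OF assms(1,2) j] .
  finally show ?thesis .
qed

lemma card_cholesky_inverse_column_le:
  assumes "0 < J" "\<And>m. m \<le> M \<Longrightarrow> 0 < r m"
    and pat: "mra_lp_pattern n M J r cell B"
    and chol: "cholesky_factor (Nprime M J r) (Lambda_D n B d) L"
    and inv: "is_inverse (Nprime M J r) L Linv"
    and j: "j < Nprime M J r"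
  shows "card {i. i < Nprime M J r \<and> Linv i j \<noteq> 0} \<le> (\<Sum>m\<le>M. r m)"
proof -
  have "card {i. i < Nprime M J r \<and> Linv i j \<noteq> 0} \<le> card {i. i < Nprime M J r \<and> col_nested M J r j i}"
    using mra_cholesky_inverse_support[OF pat chol inv _ j] by (intro card_mono) auto
  also have "\<dots> \<le> (\<Sum>m\<le>M. r m)" using card_col_nested_le[OF assms(1,2) j] .
  finally show ?thesis .
qed

theorem proposition5:
  shows "\<exists>C::real. \<forall>(n::nat) (M::nat) (J::nat) (r::nat \<Rightarrow> nat) (cell::nat \<Rightarrow> nat) (obs::nat set)
      (B::nat \<Rightarrow> nat \<Rightarrow> real) (d::nat \<Rightarrow> real) (L::nat \<Rightarrow> nat \<Rightarrow> real) (Linv::nat \<Rightarrow> nat \<Rightarrow> real).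
    J \<ge> 2 \<longrightarrow> (\<forall>m\<le>M. r m \<ge> 1) \<longrightarrow>
    mra_partition n M J cell obs \<longrightarrow>
    mra_lp_pattern n M J r cell B \<longrightarrow>
    (\<forall>i<n. d i \<ge> 0) \<longrightarrow> (\<forall>i<n. i \<notin> obs \<longrightarrow> d i = 0) \<longrightarrow>
    cholesky_factor (Nprime M J r) (Lambda_D n B d) L \<longrightarrow>
    is_inverse (Nprime M J r) L Linv \<longrightarrow>
    \<comment> \<open>(a)\<close>
    (\<forall>p q. q \<le> p \<longrightarrow> p \<le> M \<longrightarrow>
        card {k. k < Nprime M J r \<and> col_level M J r k = p} = J ^ p * r p \<and>
        card {l. l < Nprime M J r \<and> col_level M J r l = q} = J ^ q * r q \<and>
        (\<forall>t < J ^ q.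
           card {k. k < Nprime M J r \<and> col_level M J r k = p \<and>
                    col_block M J r k div J ^ (p - q) = t} = J ^ (p - q) * r p \<and>
           card {l. l < Nprime M J r \<and> col_level M J r l = q \<and> col_block M J r l = t} = r q) \<and>
        (\<forall>k < Nprime M J r. \<forall>l < Nprime M J r.
           col_level M J r k = p \<longrightarrow> col_level M J r l = q \<longrightarrow>
           col_block M J r k div J ^ (p - q) \<noteq> col_block M J r l \<longrightarrow>
           Lambda_D n B d k l = 0)) \<and>
    \<comment> \<open>(b)\<close>
    (\<forall>i j. j < i \<longrightarrow> i < Nprime M J r \<longrightarrow> \<not> mra_adj M J r i j \<longrightarrow>
        L i j = 0 \<and> Linv i j = 0) \<and>
    \<comment> \<open>(c)\<close>
    (\<forall>i<n. \<forall>k < Nprime M J r.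
        cell i div J ^ (M - col_level M J r k) \<noteq> col_block M J r k \<longrightarrow>
        B_D (Nprime M J r) B Linv i k = 0) \<and>
    \<comment> \<open>(d)\<close>
    (\<forall>j < Nprime M J r.
        real (card {i. i < Nprime M J r \<and> L i j \<noteq> 0}) \<le> C * real (\<Sum>m\<le>M. r m) \<and>
        real (card {i. i < Nprime M J r \<and> Linv i j \<noteq> 0}) \<le> C * real (\<Sum>m\<le>M. r m))"
  apply (rule exI[of _ 1], intro allI impI conjI)
  subgoal by (simp add: card_col_level)
  subgoal by (simp add: card_col_level)
  subgoal by (rule card_col_block_div) (auto simp: Suc_le_eq)
  subgoal by (rule card_col_block) (auto simp: Suc_le_eq)
  subgoal by (rule Lambda_D_eq_0_off_blocks) auto
  subgoal by (rule mra_cholesky_eq_0_if_not_adj)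
  subgoal by (rule mra_cholesky_inverse_eq_0_if_not_adj)
  subgoal by (rule B_D_eq_0_outside_pattern)
  subgoal by (simp only: mult_1 of_nat_le_iff) (rule card_cholesky_column_le; auto simp: Suc_le_eq)
  subgoal
    by (simp only: mult_1 of_nat_le_iff) (rule card_cholesky_inverse_column_le; auto simp: Suc_le_eq)
  done

end
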